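(* For the hypercube $Q_n$: (1) $str(Q_2)\ge6$, $str(Q_3)\ge11$, $str(Q_4)\ge21$; (2) $str(Q_n)\ge 2^n+4n-12$ for $5\le n\le 9$; (3) $str(Q_{2m})\ge 2^{2m}+m^2+4$ for all $m\ge5$; (4) $str(Q_{2m-1})\ge 2^{2m-1}+m^2-m+4$ for all $m\ge6$.
   Context: $Q_n$ is the $n$-dimensional hypercube (vertex set $\mathbb Z_2^n$, adjacency iff differing in exactly one coordinate), of order $2^n$. For a graph $G$ of order $p$, a numbering is a bijection $f:V(G)\to[1,p]$; $str_f(G)=\max\{f(u)+f(v): uv\in E(G)\}$ and $str(G)=\min_f str_f(G)$. *)

theory Defs
  imports Main
begin

definition hc_verts :: "nat \<Rightarrow> bool list set" where
  "hc_verts n = {xs. length xs = n}"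

definition hc_adj :: "nat \<Rightarrow> bool list \<Rightarrow> bool list \<Rightarrow> bool" where
  "hc_adj n xs ys \<longleftrightarrow> xs \<in> hc_verts n \<and> ys \<in> hc_verts n \<and>
     card {i. i < n \<and> xs ! i \<noteq> ys ! i} = 1"

definition numbering :: "'a set \<Rightarrow> ('a \<Rightarrow> nat) \<Rightarrow> bool" where
  "numbering V f \<longleftrightarrow> bij_betw f V {1..card V}"

definition str_f :: "'a set \<Rightarrow> ('a \<Rightarrow> 'a \<Rightarrow> bool) \<Rightarrow> ('a \<Rightarrow> nat) \<Rightarrow> nat" where
  "str_f V E f = Max {f u + f v | u v. u \<in> V \<and> v \<in> V \<and> E u v}"

definition strength :: "'a set \<Rightarrow> ('a \<Rightarrow> 'a \<Rightarrow> bool) \<Rightarrow> nat" where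
  "strength V E = Min {str_f V E f | f. numbering V f}"

definition str_Q :: "nat \<Rightarrow> nat" where
  "str_Q n = strength (hc_verts n) (hc_adj n)"

end

(* Let f be a numbering of a graph on p vertices with strength s, and let S be the set of the
   t vertices labelled p - t + 1, ..., p. A neighbour y of a vertex of S has f y <= s - (p - t + 1),
   and these labels are distinct, so s >= p + |N(S)| + 1 - t. In Q_n every vertex has n neighbours,
   two distinct vertices have at most two common neighbours, and three vertices whose
   neighbourhoods meet pairwise have a common neighbour. Adding the vertices of S one at a time
   gives |N(S)| >= t n - t (t - 1), and inclusion-exclusion on four neighbourhoods improves this
   by 3 as soon as t >= 4. The four bounds follow with t = 1, 2, 4 and m. *)

theory Submission
  imports Defs
begin

section \<open>Strength and neighbourhoods in a general graph\<close>

definition nbhd :: "('a \<Rightarrow> 'a \<Rightarrow> bool) \<Rightarrow> 'a set \<Rightarrow> 'a set" where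
  "nbhd E S = (\<Union>x\<in>S. Collect (E x))"

lemma str_f_cong:
  assumes "\<And>x. x \<in> V \<Longrightarrow> f x = g x"
  shows "str_f V E f = str_f V E g"
  unfolding str_f_def using assms by (metis (no_types, lifting))

lemma finite_str_f_numberings:
  assumes "finite V"
  shows "finite {str_f V E f | f. numbering V f}"
proof (rule finite_subset)
  let ?F = "{g. \<forall>x. (x \<in> V \<longrightarrow> g x \<in> {1..card V}) \<and> (x \<notin> V \<longrightarrow> g x = 0)}"
  show "{str_f V E f | f. numbering V f} \<subseteq> str_f V E ` ?F"
  proof clarify
    fix f assume "numbering V f"
    then have "(\<lambda>x. if x \<in> V then f x else 0) \<in> ?F"
      unfolding numbering_def bij_betw_def by auto
    moreover have "str_f V E f = str_f V E (\<lambda>x. if x \<in> V then f x else 0)"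
      by (rule str_f_cong) simp
    ultimately show "str_f V E f \<in> str_f V E ` ?F" by blast
  qed
  show "finite (str_f V E ` ?F)"
    by (intro finite_imageI finite_set_of_finite_funs assms finite_atLeastAtMost)
qed

lemma strength_geI:
  assumes "finite V" and "\<And>f. numbering V f \<Longrightarrow> b \<le> str_f V E f"
  shows "b \<le> strength V E"
proof -
  obtain h where "bij_betw h {1..card V} V"
    using ex_bij_betw_nat_finite_1[OF assms(1)] by blast
  then have "numbering V (inv_into {1..card V} h)"
    unfolding numbering_def by (rule bij_betw_inv_into)
  then have "{str_f V E f | f. numbering V f} \<noteq> {}" by blast
  then show ?thesis
    unfolding strength_def using finite_str_f_numberings[OF assms(1)] assms(2) by auto
qed

lemma str_f_ge_edge:
  assumes "finite V" "u \<in> V" "v \<in> V" "E u v"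
  shows "f u + f v \<le> str_f V E f"
proof -
  have "{f u + f v | u v. u \<in> V \<and> v \<in> V \<and> E u v} \<subseteq> (\<lambda>(u, v). f u + f v) ` (V \<times> V)"
    by auto
  then have "finite {f u + f v | u v. u \<in> V \<and> v \<in> V \<and> E u v}"
    by (rule finite_subset) (use assms(1) in simp)
  then show ?thesis
    unfolding str_f_def using assms by (intro Max_ge) auto
qed

lemma numbering_top_labels:
  assumes "numbering V f" "t \<le> card V"
  obtains S where "S \<subseteq> V" "card S = t" "\<And>x. x \<in> S \<Longrightarrow> card V < f x + t"
proof
  define S where "S = {x \<in> V. card V < f x + t}"
  have inj: "inj_on f V" and img: "f ` V = {1..card V}"
    using assms(1) unfolding numbering_def bij_betw_def by auto
  have "f ` S = {card V + 1 - t..card V}"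
  proof
    have "f x \<in> {1..card V}" if "x \<in> V" for x
      using img that by blast
    then show "f ` S \<subseteq> {card V + 1 - t..card V}"
      unfolding S_def by fastforce
    show "{card V + 1 - t..card V} \<subseteq> f ` S"
    proof
      fix k assume k: "k \<in> {card V + 1 - t..card V}"
      then have "k \<in> f ` V" using img assms(2) by auto
      then obtain x where "x \<in> V" "k = f x" by blast
      with k show "k \<in> f ` S" unfolding S_def by auto
    qed
  qed
  moreover have "inj_on f S"
    using inj unfolding S_def by (rule inj_on_subset) auto
  ultimately show "card S = t"
    using card_image assms(2) by fastforce
  show "S \<subseteq> V" "\<And>x. x \<in> S \<Longrightarrow> card V < f x + t"
    unfolding S_def by auto
qed

lemma str_f_gt_nbhd:
  assumes fin: "finite V" and num: "numbering V f"
    and edges: "\<And>x y. E x y \<Longrightarrow> x \<in> V \<and> y \<in> V"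
    and top: "\<And>x. x \<in> S \<Longrightarrow> card V < f x + t"
    and ne: "nbhd E S \<noteq> {}"
  shows "card V + card (nbhd E S) < str_f V E f + t"
proof -
  define U where "U = nbhd E S"
  define s where "s = str_f V E f"
  have U_V: "U \<subseteq> V" unfolding U_def nbhd_def using edges by auto
  have pos: "\<And>y. y \<in> V \<Longrightarrow> 1 \<le> f y"
    using num unfolding numbering_def bij_betw_def by auto
  have low: "card V + f y < s + t" if "y \<in> U" for y
  proof -
    obtain x where "x \<in> S" "E x y" using \<open>y \<in> U\<close> unfolding U_def nbhd_def by blast
    then have "f x + f y \<le> s" unfolding s_def using fin edges by (blast intro: str_f_ge_edge)
    then show ?thesis using top[OF \<open>x \<in> S\<close>] by linarith
  qed
  have "inj_on f U"
    using num U_V unfolding numbering_def bij_betw_def by (blast intro: inj_on_subset)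
  then have "card U = card (f ` U)" by (rule card_image[symmetric])
  also have "\<dots> \<le> card {1..s + t - (card V + 1)}"
    using low pos U_V by (intro card_mono) fastforce+
  finally have "card U \<le> s + t - (card V + 1)" by simp
  moreover obtain y where "y \<in> U" using ne unfolding U_def by blast
  then have "card V + 1 < s + t" using low pos U_V by fastforce
  ultimately show ?thesis unfolding U_def s_def by linarith
qed

lemma strength_gt_nbhd:
  assumes fin: "finite V" and edges: "\<And>x y. E x y \<Longrightarrow> x \<in> V \<and> y \<in> V"
    and "t \<le> card V" "0 < B"
    and nbhd_ge: "\<And>S. S \<subseteq> V \<Longrightarrow> card S = t \<Longrightarrow> B \<le> card (nbhd E S)"
  shows "card V + B < strength V E + t"
proof -
  have "card V + B + 1 - t \<le> strength V E"
  proof (rule strength_geI[OF fin])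
    fix f assume num: "numbering V f"
    then obtain S where S: "S \<subseteq> V" "card S = t" "\<And>x. x \<in> S \<Longrightarrow> card V < f x + t"
      using numbering_top_labels \<open>t \<le> card V\<close> by blast
    have "B \<le> card (nbhd E S)" using nbhd_ge S by blast
    then have "nbhd E S \<noteq> {}" using \<open>0 < B\<close> by auto
    then have "card V + card (nbhd E S) < str_f V E f + t"
      using str_f_gt_nbhd[OF fin num edges] S(3) by blast
    then show "card V + B + 1 - t \<le> str_f V E f"
      using \<open>B \<le> card (nbhd E S)\<close> by linarith
  qed
  then show ?thesis using \<open>t \<le> card V\<close> by linarith
qed

section \<open>Four sets with small pairwise intersections\<close>

lemma card_Un3_Int:
  assumes "finite A" "finite B" "finite C"
  shows "card (A \<union> B \<union> C) + card (A \<inter> B) + card (A \<inter> C) + card (B \<inter> C)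
    = card A + card B + card C + card (A \<inter> B \<inter> C)"
proof -
  have "card (A \<union> B \<union> C) + card ((A \<inter> C) \<union> (B \<inter> C)) = card (A \<union> B) + card C"
    using card_Un_Int[of "A \<union> B" C] assms by (simp add: Int_Un_distrib2)
  moreover have "card ((A \<inter> C) \<union> (B \<inter> C)) + card (A \<inter> B \<inter> C) = card (A \<inter> C) + card (B \<inter> C)"
    using card_Un_Int[of "A \<inter> C" "B \<inter> C"] assms by (simp add: Int_ac)
  moreover have "card (A \<union> B) + card (A \<inter> B) = card A + card B"
    using card_Un_Int[of A B] assms by simp
  ultimately show ?thesis by linarith
qed

lemma card_Un4_Int:
  assumes "finite A" "finite B" "finite C" "finite D"
  shows "card (A \<union> B \<union> C \<union> D)
      + card (A \<inter> B) + card (A \<inter> C) + card (A \<inter> D) + card (B \<inter> C) + card (B \<inter> D) + card (C \<inter> D)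
      + card (A \<inter> B \<inter> C \<inter> D)
    = card A + card B + card C + card D
      + card (A \<inter> B \<inter> C) + card (A \<inter> B \<inter> D) + card (A \<inter> C \<inter> D) + card (B \<inter> C \<inter> D)"
proof -
  have "card (A \<union> B \<union> C \<union> D) + card ((A \<inter> D) \<union> (B \<inter> D) \<union> (C \<inter> D))
      = card (A \<union> B \<union> C) + card D"
    using card_Un_Int[of "A \<union> B \<union> C" D] assms by (simp add: Int_Un_distrib2)
  moreover have "card ((A \<inter> D) \<union> (B \<inter> D) \<union> (C \<inter> D))
      + card (A \<inter> B \<inter> D) + card (A \<inter> C \<inter> D) + card (B \<inter> C \<inter> D)
      = card (A \<inter> D) + card (B \<inter> D) + card (C \<inter> D) + card (A \<inter> B \<inter> C \<inter> D)"
    using card_Un3_Int[of "A \<inter> D" "B \<inter> D" "C \<inter> D"] assms by (simp add: Int_ac)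
  ultimately show ?thesis
    using card_Un3_Int[OF assms(1-3)] by linarith
qed

lemma card_pairwise_Int_le:
  assumes "finite X" "card (X \<inter> Y) \<le> 2" "card (X \<inter> Z) \<le> 2" "card (Y \<inter> Z) \<le> 2"
    and "X \<inter> Y \<noteq> {} \<Longrightarrow> X \<inter> Z \<noteq> {} \<Longrightarrow> Y \<inter> Z \<noteq> {} \<Longrightarrow> X \<inter> Y \<inter> Z \<noteq> {}"
  shows "card (X \<inter> Y) + card (X \<inter> Z) + card (Y \<inter> Z) \<le> 4 + 2 * card (X \<inter> Y \<inter> Z)"
proof (cases "X \<inter> Y = {} \<or> X \<inter> Z = {} \<or> Y \<inter> Z = {}")
  case True
  then show ?thesis using assms(2-4) by auto
next
  case False
  then have "0 < card (X \<inter> Y \<inter> Z)" using assms(1,5) by (simp add: card_gt_0_iff)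
  then show ?thesis using assms(2-4) by linarith
qed

lemma card_Un4_ge:
  fixes A B C D :: "'a set"
  assumes fin: "finite A" "finite B" "finite C" "finite D"
    and card: "card A = d" "card B = d" "card C = d" "card D = d"
    and pairs: "card (A \<inter> B) \<le> 2" "card (A \<inter> C) \<le> 2" "card (A \<inter> D) \<le> 2"
      "card (B \<inter> C) \<le> 2" "card (B \<inter> D) \<le> 2" "card (C \<inter> D) \<le> 2"
    and triple: "\<And>X Y Z. X \<in> {A, B, C, D} \<Longrightarrow> Y \<in> {A, B, C, D} \<Longrightarrow> Z \<in> {A, B, C, D} \<Longrightarrow>
      X \<inter> Y \<noteq> {} \<Longrightarrow> X \<inter> Z \<noteq> {} \<Longrightarrow> Y \<inter> Z \<noteq> {} \<Longrightarrow> X \<inter> Y \<inter> Z \<noteq> {}"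
  shows "4 * d \<le> card (A \<union> B \<union> C \<union> D) + 9"
proof -
  have triples:
    "card (A \<inter> B) + card (A \<inter> C) + card (B \<inter> C) \<le> 4 + 2 * card (A \<inter> B \<inter> C)"
    "card (A \<inter> B) + card (A \<inter> D) + card (B \<inter> D) \<le> 4 + 2 * card (A \<inter> B \<inter> D)"
    "card (A \<inter> C) + card (A \<inter> D) + card (C \<inter> D) \<le> 4 + 2 * card (A \<inter> C \<inter> D)"
    "card (B \<inter> C) + card (B \<inter> D) + card (C \<inter> D) \<le> 4 + 2 * card (B \<inter> C \<inter> D)"
    by (rule card_pairwise_Int_le; (use fin pairs triple in simp)?)+
  have quadruple:
    "card (A \<inter> B \<inter> C \<inter> D) \<le> card (A \<inter> B \<inter> C)" "card (A \<inter> B \<inter> C \<inter> D) \<le> card (A \<inter> B \<inter> D)"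
    "card (A \<inter> B \<inter> C \<inter> D) \<le> card (A \<inter> C \<inter> D)" "card (A \<inter> B \<inter> C \<inter> D) \<le> card (B \<inter> C \<inter> D)"
    using fin by (auto intro!: card_mono)
  \<comment> \<open>Half the sum of the triple bounds suffices if the quadruple intersection is empty;
    otherwise every triple intersection is at least as large as it and the pair bounds suffice.\<close>
  show ?thesis
  proof (cases "A \<inter> B \<inter> C \<inter> D = {}")
    case True
    then show ?thesis using card_Un4_Int[OF fin] card triples by simp
  next
    case False
    then have "0 < card (A \<inter> B \<inter> C \<inter> D)" using fin by (simp add: card_gt_0_iff)
    then show ?thesis using card_Un4_Int[OF fin] card pairs quadruple by linarith
  qed
qed

section \<open>Neighbourhoods in the hypercube\<close>

definition flip_coord :: "bool list \<Rightarrow> nat \<Rightarrow> bool list" where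
  "flip_coord x i = x[i := \<not> x ! i]"

definition diff_coords :: "nat \<Rightarrow> bool list \<Rightarrow> bool list \<Rightarrow> nat set" where
  "diff_coords n x y = {i. i < n \<and> x ! i \<noteq> y ! i}"

lemma finite_hc_verts: "finite (hc_verts n)"
  unfolding hc_verts_def by (rule finite_list_length)

lemma card_hc_verts: "card (hc_verts n) = 2 ^ n"
  using card_lists_length_eq[of "UNIV :: bool set" n] unfolding hc_verts_def by simp

lemma hc_adj_in_hc_verts: "hc_adj n x y \<Longrightarrow> x \<in> hc_verts n \<and> y \<in> hc_verts n"
  unfolding hc_adj_def by simp

lemma finite_diff_coords: "finite (diff_coords n x y)"
  unfolding diff_coords_def by simp

lemma diff_coords_commute: "diff_coords n x y = diff_coords n y x"
  unfolding diff_coords_def by auto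

lemma diff_coords_trans:
  "diff_coords n x z = (diff_coords n x y - diff_coords n y z) \<union> (diff_coords n y z - diff_coords n x y)"
  unfolding diff_coords_def by auto

lemma diff_coords_empty_iff:
  "x \<in> hc_verts n \<Longrightarrow> y \<in> hc_verts n \<Longrightarrow> diff_coords n x y = {} \<longleftrightarrow> x = y"
  unfolding diff_coords_def hc_verts_def by (auto intro: nth_equalityI)

lemma flip_coord_in_hc_verts: "x \<in> hc_verts n \<Longrightarrow> flip_coord x i \<in> hc_verts n"
  unfolding flip_coord_def hc_verts_def by simp

lemma diff_coords_flip_coord:
  "x \<in> hc_verts n \<Longrightarrow> i < n \<Longrightarrow> diff_coords n x (flip_coord x i) = {i}"
  unfolding diff_coords_def flip_coord_def hc_verts_def by (auto simp: nth_list_update)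

lemma hc_adj_iff_card_diff_coords:
  "hc_adj n x y \<longleftrightarrow> x \<in> hc_verts n \<and> y \<in> hc_verts n \<and> card (diff_coords n x y) = 1"
  unfolding hc_adj_def diff_coords_def ..

lemma hc_adj_flip_coord:
  assumes "x \<in> hc_verts n" "i < n"
  shows "hc_adj n x (flip_coord x i)"
  using assms diff_coords_flip_coord flip_coord_in_hc_verts hc_adj_iff_card_diff_coords by simp

lemma hc_adjE:
  assumes "hc_adj n x y"
  obtains i where "i < n" "y = flip_coord x i"
proof -
  have xy: "x \<in> hc_verts n" "y \<in> hc_verts n" "card (diff_coords n x y) = 1"
    using assms hc_adj_iff_card_diff_coords by auto
  obtain i where i: "diff_coords n x y = {i}"
    using xy(3) by (rule card_1_singletonE)
  then have "i < n" unfolding diff_coords_def by auto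
  have "diff_coords n (flip_coord x i) y = {}"
    using diff_coords_trans[of n "flip_coord x i" y x] diff_coords_commute[of n "flip_coord x i" x]
      diff_coords_flip_coord[OF xy(1) \<open>i < n\<close>] i by simp
  then have "y = flip_coord x i"
    using diff_coords_empty_iff[OF flip_coord_in_hc_verts[OF xy(1)] xy(2)] by simp
  with \<open>i < n\<close> show thesis by (rule that)
qed

lemma hc_neighbours_eq:
  assumes "x \<in> hc_verts n"
  shows "Collect (hc_adj n x) = flip_coord x ` {..<n}"
proof
  show "Collect (hc_adj n x) \<subseteq> flip_coord x ` {..<n}"
  proof
    fix y assume "y \<in> Collect (hc_adj n x)"
    then obtain i where "i < n" "y = flip_coord x i" by (auto elim: hc_adjE)
    then show "y \<in> flip_coord x ` {..<n}" by simp
  qed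
  show "flip_coord x ` {..<n} \<subseteq> Collect (hc_adj n x)"
    using hc_adj_flip_coord[OF assms] by blast
qed

lemma card_hc_neighbours:
  assumes "x \<in> hc_verts n"
  shows "card (Collect (hc_adj n x)) = n"
proof -
  have "inj_on (flip_coord x) {..<n}"
  proof (rule inj_onI)
    fix i j assume "i \<in> {..<n}" "j \<in> {..<n}" and eq: "flip_coord x i = flip_coord x j"
    have "{i} = diff_coords n x (flip_coord x i)"
      using diff_coords_flip_coord[OF assms] \<open>i \<in> {..<n}\<close> by simp
    also have "\<dots> = {j}"
      using diff_coords_flip_coord[OF assms] \<open>j \<in> {..<n}\<close> eq by simp
    finally show "i = j" by simp
  qed
  then show ?thesis using hc_neighbours_eq[OF assms] by (simp add: card_image)
qed

lemma finite_hc_neighbours: "finite (Collect (hc_adj n x))"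
  by (rule finite_subset[OF _ finite_hc_verts]) (use hc_adj_in_hc_verts in blast)

lemma hc_common_neighbour:
  assumes "hc_adj n x w" "hc_adj n y w" "x \<noteq> y"
  shows "card (diff_coords n x y) = 2" "\<exists>i \<in> diff_coords n x y. w = flip_coord x i"
proof -
  have x: "x \<in> hc_verts n" and y: "y \<in> hc_verts n"
    using assms(1,2) hc_adj_in_hc_verts by blast+
  obtain i where "i < n" and wx: "w = flip_coord x i" using assms(1) by (rule hc_adjE)
  obtain j where "j < n" and wy: "w = flip_coord y j" using assms(2) by (rule hc_adjE)
  have "diff_coords n x w = {i}"
    using diff_coords_flip_coord[OF x \<open>i < n\<close>] wx by simp
  moreover have "diff_coords n w y = {j}"
    using diff_coords_flip_coord[OF y \<open>j < n\<close>] wy diff_coords_commute[of n w y] by simp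
  ultimately have xy: "diff_coords n x y = {i} - {j} \<union> ({j} - {i})"
    using diff_coords_trans[of n x y w] by simp
  have "i \<noteq> j"
    using xy diff_coords_empty_iff[OF x y] assms(3) by auto
  with xy wx show "card (diff_coords n x y) = 2" "\<exists>i \<in> diff_coords n x y. w = flip_coord x i"
    by auto
qed

lemma card_hc_common_neighbours_le:
  assumes "x \<noteq> y"
  shows "card (Collect (hc_adj n x) \<inter> Collect (hc_adj n y)) \<le> 2"
proof (cases "Collect (hc_adj n x) \<inter> Collect (hc_adj n y) = {}")
  case False
  then have "card (diff_coords n x y) = 2" using hc_common_neighbour(1) assms by blast
  have "Collect (hc_adj n x) \<inter> Collect (hc_adj n y) \<subseteq> flip_coord x ` diff_coords n x y"
    using hc_common_neighbour(2) assms by blast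
  then have "card (Collect (hc_adj n x) \<inter> Collect (hc_adj n y))
      \<le> card (flip_coord x ` diff_coords n x y)"
    by (intro card_mono finite_imageI finite_diff_coords)
  also have "\<dots> \<le> card (diff_coords n x y)"
    by (intro card_image_le finite_diff_coords)
  finally show ?thesis using \<open>card (diff_coords n x y) = 2\<close> by simp
qed simp

text \<open>For three vertices at pairwise distance two, the two-element sets \<open>diff_coords n x y\<close>
  and \<open>diff_coords n x z\<close> meet, since their symmetric difference \<open>diff_coords n y z\<close> has only
  two elements; flipping \<open>x\<close> in a common coordinate gives the common neighbour.\<close>
lemma hc_common_neighbour_of_three:
  assumes "Collect (hc_adj n x) \<inter> Collect (hc_adj n y) \<noteq> {}"
    "Collect (hc_adj n x) \<inter> Collect (hc_adj n z) \<noteq> {}"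
    "Collect (hc_adj n y) \<inter> Collect (hc_adj n z) \<noteq> {}"
  shows "Collect (hc_adj n x) \<inter> Collect (hc_adj n y) \<inter> Collect (hc_adj n z) \<noteq> {}"
proof (cases "x = y \<or> x = z \<or> y = z")
  case True
  then show ?thesis using assms by auto
next
  case False
  then have cards: "card (diff_coords n x y) = 2" "card (diff_coords n x z) = 2"
    "card (diff_coords n y z) = 2"
    using assms hc_common_neighbour(1) by blast+
  have x: "x \<in> hc_verts n" using assms(1) hc_adj_in_hc_verts by blast
  have "diff_coords n x y \<inter> diff_coords n x z \<noteq> {}"
  proof
    assume disj: "diff_coords n x y \<inter> diff_coords n x z = {}"
    then have "diff_coords n y z = diff_coords n x y \<union> diff_coords n x z"
      using diff_coords_trans[of n y z x] diff_coords_commute[of n y x] by auto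
    then show False
      using cards card_Un_disjoint[OF finite_diff_coords finite_diff_coords disj] by simp
  qed
  then obtain a where a: "a \<in> diff_coords n x y" "a \<in> diff_coords n x z" by blast
  then have "a < n" unfolding diff_coords_def by simp
  have "hc_adj n v (flip_coord x a)" if "a \<in> diff_coords n x v" "card (diff_coords n x v) = 2"
    "v \<in> hc_verts n" for v
  proof -
    have "diff_coords n v (flip_coord x a) = diff_coords n x v - {a}"
      using diff_coords_trans[of n v "flip_coord x a" x] diff_coords_commute[of n v x]
        diff_coords_flip_coord[OF x \<open>a < n\<close>] that(1) by auto
    then show ?thesis
      using that finite_diff_coords hc_adj_iff_card_diff_coords flip_coord_in_hc_verts[OF x] by simp
  qed
  then have "flip_coord x a \<in> Collect (hc_adj n y) \<inter> Collect (hc_adj n z)"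
    using a cards assms hc_adj_in_hc_verts by blast
  moreover have "flip_coord x a \<in> Collect (hc_adj n x)" using hc_adj_flip_coord[OF x \<open>a < n\<close>] by simp
  ultimately show ?thesis by blast
qed

section \<open>Lower bounds for the strength of the hypercube\<close>

lemma card_UN_insert_ge:
  assumes "finite S" "x \<notin> S" "\<And>y. finite (N y)" "\<And>s. s \<in> S \<Longrightarrow> card (N x \<inter> N s) \<le> c"
  shows "card (\<Union>(N ` S)) + card (N x) \<le> card (\<Union>(N ` insert x S)) + c * card S"
proof -
  have "N x \<inter> \<Union>(N ` S) = (\<Union>s\<in>S. N x \<inter> N s)" by blast
  then have "card (N x \<inter> \<Union>(N ` S)) \<le> (\<Sum>s\<in>S. card (N x \<inter> N s))"
    using card_UN_le[OF assms(1), of "\<lambda>s. N x \<inter> N s"] by (simp only:)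
  also have "\<dots> \<le> card S * c"
    using sum_bounded_above[of S "\<lambda>s. card (N x \<inter> N s)" c] assms(4) by simp
  finally have "card (N x \<inter> \<Union>(N ` S)) \<le> c * card S" by (simp add: mult.commute)
  moreover have "card (N x) + card (\<Union>(N ` S)) = card (\<Union>(N ` insert x S)) + card (N x \<inter> \<Union>(N ` S))"
    using card_Un_Int[of "N x" "\<Union>(N ` S)"] assms(1,3) by simp
  ultimately show ?thesis by linarith
qed

text \<open>The quantity \<open>card (nbhd S) + |S| (|S| - 1) - |S| n\<close> grows with \<open>S\<close>, because a new
  vertex has \<open>n\<close> neighbours of which at most two are shared with each old vertex.\<close>
lemma card_hc_nbhd_excess_mono:
  assumes "T \<subseteq> S" "S \<subseteq> hc_verts n"
  shows "card (nbhd (hc_adj n) T) + card T * (card T - 1) + card S * n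
    \<le> card (nbhd (hc_adj n) S) + card S * (card S - 1) + card T * n"
proof -
  have fin: "finite S" using assms(2) finite_hc_verts by (rule finite_subset)
  have "card (nbhd (hc_adj n) T) + card T * (card T - 1) + card (T \<union> R) * n
    \<le> card (nbhd (hc_adj n) (T \<union> R)) + card (T \<union> R) * (card (T \<union> R) - 1) + card T * n"
    if "finite R" "R \<subseteq> S - T" for R
    using that
  proof (induction R rule: finite_subset_induct)
    case empty
    then show ?case by simp
  next
    case (insert x R)
    define X where "X = T \<union> R"
    have "finite X" unfolding X_def using finite_subset[OF assms(1) fin] insert.hyps(1) by simp
    moreover have "x \<notin> X" unfolding X_def using insert.hyps(2,3) by blast
    moreover have "x \<in> hc_verts n" using insert.hyps(2) assms(2) by blast
    ultimately have step: "card (nbhd (hc_adj n) X) + n \<le> card (nbhd (hc_adj n) (insert x X)) + 2 * card X"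
    proof -
      have "card (Collect (hc_adj n x) \<inter> Collect (hc_adj n s)) \<le> 2" if "s \<in> X" for s
        using \<open>x \<notin> X\<close> that by (intro card_hc_common_neighbours_le) blast
      with card_UN_insert_ge[of X x "\<lambda>y. Collect (hc_adj n y)" 2] \<open>finite X\<close> \<open>x \<notin> X\<close>
      show ?thesis
        using finite_hc_neighbours card_hc_neighbours[OF \<open>x \<in> hc_verts n\<close>]
        unfolding nbhd_def by simp
    qed
    have "T \<union> insert x R = insert x X" unfolding X_def by blast
    have card_eq: "card (insert x X) = Suc (card X)"
      using \<open>finite X\<close> \<open>x \<notin> X\<close> by simp
    have "Suc (card X) * (Suc (card X) - 1) = card X * (card X - 1) + 2 * card X"
      by (cases "card X") auto
    moreover have "Suc (card X) * n = card X * n + n" by simp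
    moreover have "card (nbhd (hc_adj n) T) + card T * (card T - 1) + card X * n
      \<le> card (nbhd (hc_adj n) X) + card X * (card X - 1) + card T * n"
      using insert.IH unfolding X_def .
    ultimately show ?case
      unfolding \<open>T \<union> insert x R = insert x X\<close> card_eq using step by linarith
  qed
  from this[of "S - T"] show ?thesis using fin assms(1) by (simp add: Un_absorb1)
qed

lemma card_hc_nbhd_ge:
  assumes "S \<subseteq> hc_verts n"
  shows "card S * n \<le> card (nbhd (hc_adj n) S) + card S * (card S - 1)"
  using card_hc_nbhd_excess_mono[OF empty_subsetI assms] by (simp add: nbhd_def)

lemma card_hc_nbhd_four:
  assumes "T \<subseteq> hc_verts n" "card T = 4"
  shows "4 * n \<le> card (nbhd (hc_adj n) T) + 9"
proof -
  obtain a R where aR: "T = insert a R" "a \<notin> R" "card R = 3"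
    using card_eq_SucD[of T 3] assms(2) by auto
  then obtain b c d where bcd: "R = {b, c, d}" "b \<noteq> c" "c \<noteq> d" "b \<noteq> d"
    by (auto simp: card_3_iff)
  define N where "N u = Collect (hc_adj n u)" for u
  have T: "T = {a, b, c, d}" "a \<noteq> b" "a \<noteq> c" "a \<noteq> d" using aR bcd by auto
  have fin: "finite (N u)" for u
    unfolding N_def by (rule finite_hc_neighbours)
  have card_N: "card (N u) = n" if "u \<in> T" for u
    unfolding N_def using that assms(1) card_hc_neighbours by blast
  have pair: "card (N u \<inter> N v) \<le> 2" if "u \<noteq> v" for u v
    unfolding N_def using that by (rule card_hc_common_neighbours_le)
  have triple: "X \<inter> Y \<inter> Z \<noteq> {}"
    if mem: "X \<in> {N a, N b, N c, N d}" "Y \<in> {N a, N b, N c, N d}" "Z \<in> {N a, N b, N c, N d}"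
      and meet: "X \<inter> Y \<noteq> {}" "X \<inter> Z \<noteq> {}" "Y \<inter> Z \<noteq> {}" for X Y Z
  proof -
    obtain u v w where "X = N u" "Y = N v" "Z = N w" using mem by blast
    then show ?thesis unfolding N_def using hc_common_neighbour_of_three meet by blast
  qed
  have "4 * n \<le> card (N a \<union> N b \<union> N c \<union> N d) + 9"
    using T bcd by (intro card_Un4_ge fin card_N pair triple) auto
  moreover have "nbhd (hc_adj n) T = N a \<union> N b \<union> N c \<union> N d"
    unfolding nbhd_def N_def T(1) by auto
  ultimately show ?thesis by simp
qed

lemma card_hc_nbhd_ge_four:
  assumes "S \<subseteq> hc_verts n" "4 \<le> card S"
  shows "card S * n + 3 \<le> card (nbhd (hc_adj n) S) + card S * (card S - 1)"
proof -
  obtain T where T: "T \<subseteq> S" "card T = 4" using obtain_subset_with_card_n[OF assms(2)] by blast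
  then have "4 * n \<le> card (nbhd (hc_adj n) T) + 9"
    using assms(1) by (intro card_hc_nbhd_four) auto
  moreover have "card (nbhd (hc_adj n) T) + 12 + card S * n
      \<le> card (nbhd (hc_adj n) S) + card S * (card S - 1) + 4 * n"
    using card_hc_nbhd_excess_mono[OF T(1) assms(1)] T(2) by simp
  ultimately show ?thesis by linarith
qed

lemma str_Q_gt:
  assumes "t \<le> 2 ^ n" "t * (t - 1) < t * n + e"
    and nbhd_ge: "\<And>S. S \<subseteq> hc_verts n \<Longrightarrow> card S = t \<Longrightarrow> t * n + e \<le> card (nbhd (hc_adj n) S) + t * (t - 1)"
  shows "2 ^ n + t * n + e < str_Q n + t + t * (t - 1)"
proof -
  have tV: "t \<le> card (hc_verts n)" using assms(1) card_hc_verts by simp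
  have pos: "0 < t * n + e - t * (t - 1)" using assms(2) by simp
  have Bge: "t * n + e - t * (t - 1) \<le> card (nbhd (hc_adj n) S)"
    if "S \<subseteq> hc_verts n" "card S = t" for S
    using nbhd_ge[OF that] by linarith
  have "card (hc_verts n) + (t * n + e - t * (t - 1)) < strength (hc_verts n) (hc_adj n) + t"
    using strength_gt_nbhd[OF finite_hc_verts hc_adj_in_hc_verts tV pos Bge] .
  then show ?thesis using assms(2) card_hc_verts[of n] unfolding str_Q_def by linarith
qed

lemma str_Q_gt_small:
  assumes "t \<le> 2 ^ n" "t * (t - 1) < t * n"
  shows "2 ^ n + t * n < str_Q n + t + t * (t - 1)"
proof -
  have "t * n + 0 \<le> card (nbhd (hc_adj n) S) + t * (t - 1)"
    if "S \<subseteq> hc_verts n" "card S = t" for S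
    using card_hc_nbhd_ge[OF that(1)] that(2) by simp
  with str_Q_gt[of t n 0] assms show ?thesis by simp
qed

lemma str_Q_gt_large:
  assumes "4 \<le> t" "t \<le> 2 ^ n" "t * (t - 1) < t * n + 3"
  shows "2 ^ n + t * n + 3 < str_Q n + t + t * (t - 1)"
proof -
  have "t * n + 3 \<le> card (nbhd (hc_adj n) S) + t * (t - 1)"
    if "S \<subseteq> hc_verts n" "card S = t" for S
    using card_hc_nbhd_ge_four[OF that(1)] that(2) assms(1) by simp
  with str_Q_gt[of t n 3] assms(2,3) show ?thesis by simp
qed

theorem mainTheorem18:
  shows "(str_Q 2 \<ge> 6 \<and> str_Q 3 \<ge> 11 \<and> str_Q 4 \<ge> 21)
    \<and> (\<forall>n. 5 \<le> n \<and> n \<le> 9 \<longrightarrow> str_Q n \<ge> 2 ^ n + 4 * n - 12)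
    \<and> (\<forall>m. 5 \<le> m \<longrightarrow> str_Q (2 * m) \<ge> 2 ^ (2 * m) + m ^ 2 + 4)
    \<and> (\<forall>m. 6 \<le> m \<longrightarrow> str_Q (2 * m - 1) \<ge> 2 ^ (2 * m - 1) + m ^ 2 - m + 4)"
proof (intro conjI allI impI)
  show "str_Q 2 \<ge> 6" using str_Q_gt_small[of 1 2] by simp
  show "str_Q 3 \<ge> 11" using str_Q_gt_small[of 1 3] by simp
  show "str_Q 4 \<ge> 21" using str_Q_gt_small[of 2 4] by simp
next
  fix n :: nat assume n: "5 \<le> n \<and> n \<le> 9"
  then have "(2::nat) ^ 2 \<le> 2 ^ n" by (intro power_increasing) auto
  then show "str_Q n \<ge> 2 ^ n + 4 * n - 12" using str_Q_gt_large[of 4 n] n by simp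
next
  fix m :: nat assume m: "5 \<le> m"
  have "m < 2 ^ m" by (rule less_exp)
  also have "(2::nat) ^ m \<le> 2 ^ (2 * m)" by (intro power_increasing) auto
  finally have "m \<le> 2 ^ (2 * m)" by simp
  moreover have "m * (m - 1) \<le> m * (2 * m)" by (rule mult_le_mono2) simp
  moreover have "m + m * (m - 1) = m ^ 2" "m * (2 * m) = 2 * m ^ 2"
    using m by (cases m) (simp_all add: power2_eq_square algebra_simps)
  ultimately show "str_Q (2 * m) \<ge> 2 ^ (2 * m) + m ^ 2 + 4"
    using str_Q_gt_large[of m "2 * m"] m by simp
next
  fix m :: nat assume m: "6 \<le> m"
  have "m < 2 ^ m" by (rule less_exp)
  also have "(2::nat) ^ m \<le> 2 ^ (2 * m - 1)" using m by (intro power_increasing) auto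
  finally have "m \<le> 2 ^ (2 * m - 1)" by simp
  moreover have "m * (m - 1) \<le> m * (2 * m - 1)" by (rule mult_le_mono2) simp
  moreover have sq: "m + m * (m - 1) = m ^ 2" and "m * (2 * m - 1) = m * (m - 1) + m ^ 2"
    using m by (cases m) (simp_all add: power2_eq_square algebra_simps)
  ultimately have "2 ^ (2 * m - 1) + m ^ 2 + 3 < str_Q (2 * m - 1) + m"
    using str_Q_gt_large[of m "2 * m - 1"] m by simp
  then show "str_Q (2 * m - 1) \<ge> 2 ^ (2 * m - 1) + m ^ 2 - m + 4" using sq by linarith
qed

end
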